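(* Let $N\ge1$, $q,p,r,s\in\mathbb{C}\setminus\{0\}$ with $q^2\ne1$, $r^2\neq1$. Then $K(\lambda):=K^{\mathrm{tr}}(\lambda,r,s)$ is a solution of the reflection equation for $R(\lambda):=R^{\mathrm{tr}}(\lambda,q,p)$: $$R_{12}(\lambda-\mu)K_1(\lambda)R_{21}(\lambda+\mu)K_2(\mu)=K_2(\mu)R_{12}(\lambda+\mu)K_1(\lambda)R_{21}(\lambda-\mu)$$ for all $\lambda,\mu\in\mathbb{C}$ at which all entries are defined.
   Context: $V=\mathbb{C}^N$ with basis $e_0,\dots,e_{N-1}$; for $A\in\mathrm{End}(V)$, $Ae_j=\sum_k e_k[A]_j^k$; for $R\in\mathrm{End}(V\otimes V)$, $R(e_i\otimes e_j)=\sum_{k,l}[R]_{ij}^{kl}e_k\otimes e_l$. $P$ is the flip, $R_{12}=R$, $R_{21}=PRP$, $K_1=K\otimes I$, $K_2=I\otimes K$. Cremmer–Gervais $R$-matrix with $z=e^{\pi i\lambda}$: $[R^{\mathrm{tr}}(\lambda,q,p)]_{ij}^{kl}=p^{2(j-k)}\times$ - $\frac{qz^{-1}-q^{-1}z}{(q-q^{-1})(z-z^{-1})}$ if $i=j=k=l$; - $-\frac{q^{\mathrm{sgn}(i-j)}}{q-q^{-1}}$ if $i=k\neq j=l$; - $\frac{z^{\mathrm{sgn}(j-i)}}{z-z^{-1}}$ if $l=i\ne k=j$; - $\mathrm{sgn}(j-i)$ if $\min(i,j)<k<\max(i,j)$ and $i+j=k+l$; - $0$ otherwise. $K$-matrix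 with $z=e^{\pi i\lambda}$: $[K^{\mathrm{tr}}(\lambda,r,s)]_j^k=s^{j-k}c_{jk}$ where $c_{jk}=\frac{r^{-1}z^{-2}-rz^2}{(r-r^{-1})(z^2-z^{-2})}$ if $j=k=(N-1)/2$; $c_{jk}=-\frac{z^{2\,\mathrm{sgn}(2j-N+1)}}{z^2-z^{-2}}$ if $j=k\ne(N-1)/2$; $c_{jk}=-\frac{r^{\mathrm{sgn}(2j-N+1)}}{r-r^{-1}}$ if $k=N-1-j\neq j$; $c_{jk}=\mathrm{sgn}(N-1-2j)$ if $\min(j,N-1-j)<k<\max(j,N-1-j)$; $c_{jk}=0$ otherwise. *)

theory Defs
  imports Complex_Main
begin

text \<open>Operators on V (x) V, V = C^N, are represented by their matrix entries:
  A i j k l is the coefficient [A]_{ij}^{kl}, i.e. A(e_i (x) e_j) = sum_{k,l} A i j k l e_k (x) e_l.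
  Operators on V: K j k = [K]_j^k, i.e. K e_j = sum_k e_k [K]_j^k.
  Only indices < N are meaningful.\<close>

definition zeta :: "complex \<Rightarrow> complex" where
  "zeta lam = exp (complex_of_real pi * \<i> * lam)"

definition CG_R :: "complex \<Rightarrow> complex \<Rightarrow> complex \<Rightarrow> nat \<Rightarrow> nat \<Rightarrow> nat \<Rightarrow> nat \<Rightarrow> complex" where
  "CG_R q p lam i j k l =
    (let z = zeta lam in
     p powi (2 * (int j - int k)) *
     (if i = j \<and> j = k \<and> k = l then
        (q * inverse z - inverse q * z) / ((q - inverse q) * (z - inverse z))
      else if i = k \<and> j = l \<and> i \<noteq> j then
        - (q powi sgn (int i - int j)) / (q - inverse q)
      else if l = i \<and> k = j \<and> i \<noteq> k then
        z powi sgn (int j - int i) / (z - inverse z)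
      else if min i j < k \<and> k < max i j \<and> i + j = k + l then
        of_int (sgn (int j - int i))
      else 0))"

definition CG_K :: "nat \<Rightarrow> complex \<Rightarrow> complex \<Rightarrow> complex \<Rightarrow> nat \<Rightarrow> nat \<Rightarrow> complex" where
  "CG_K N r s lam j k =
    (let z = zeta lam; jj = int j; kk = int k; NN = int N in
     s powi (jj - kk) *
     (if j = k \<and> 2 * jj = NN - 1 then
        (inverse r * inverse (z^2) - r * z^2) / ((r - inverse r) * (z^2 - inverse (z^2)))
      else if j = k then
        - (z powi (2 * sgn (2 * jj - NN + 1))) / (z^2 - inverse (z^2))
      else if kk = NN - 1 - jj then
        - (r powi sgn (2 * jj - NN + 1)) / (r - inverse r)
      else if min jj (NN - 1 - jj) < kk \<and> kk < max jj (NN - 1 - jj) then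
        of_int (sgn (NN - 1 - 2 * jj))
      else 0))"

text \<open>Composition A B (first B, then A) of operators on V (x) V.\<close>
definition op_comp :: "nat \<Rightarrow> (nat \<Rightarrow> nat \<Rightarrow> nat \<Rightarrow> nat \<Rightarrow> complex)
    \<Rightarrow> (nat \<Rightarrow> nat \<Rightarrow> nat \<Rightarrow> nat \<Rightarrow> complex) \<Rightarrow> (nat \<Rightarrow> nat \<Rightarrow> nat \<Rightarrow> nat \<Rightarrow> complex)" where
  "op_comp N A B = (\<lambda>i j k l. \<Sum>m<N. \<Sum>n<N. B i j m n * A m n k l)"

text \<open>R_21 = P R P.\<close>
definition op21 :: "(nat \<Rightarrow> nat \<Rightarrow> nat \<Rightarrow> nat \<Rightarrow> complex) \<Rightarrow> (nat \<Rightarrow> nat \<Rightarrow> nat \<Rightarrow> nat \<Rightarrow> complex)" where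
  "op21 A = (\<lambda>i j k l. A j i l k)"

text \<open>K_1 = K (x) I and K_2 = I (x) K.\<close>
definition op1 :: "(nat \<Rightarrow> nat \<Rightarrow> complex) \<Rightarrow> (nat \<Rightarrow> nat \<Rightarrow> nat \<Rightarrow> nat \<Rightarrow> complex)" where
  "op1 K = (\<lambda>i j k l. K i k * (if j = l then 1 else 0))"

definition op2 :: "(nat \<Rightarrow> nat \<Rightarrow> complex) \<Rightarrow> (nat \<Rightarrow> nat \<Rightarrow> nat \<Rightarrow> nat \<Rightarrow> complex)" where
  "op2 K = (\<lambda>i j k l. (if i = k then 1 else 0) * K j l)"

end

theory Submission
  imports Defs "HOL-Computational_Algebra.Polynomial"
begin

(*
  A vector \<Sum> c k l e_k \<otimes> e_l of V \<otimes> V is encoded by the polynomial \<Sum> c k l x^k y^l. Summing one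
  row of R (its entries strictly between the indices telescope) shows that R maps a monomial to a
  combination of itself and its flip; similarly K_1 and K_2 mix a monomial with the one obtained
  by inverting one variable. After rescaling the variables by p^2 and s, the four operators
  R, R_21, K_1, K_2 become explicit difference operators opR, opR21, opK1, opK2 in which p and s
  no longer occur, and these realisations chain along both sides of the reflection equation at
  all generic points.

  For the difference operators the reflection equation holds for every function: it is a
  polynomial consequence of one relation between the spectral constants (spectral_rel) and one
  relation between the rational coordinate functions. Finally, the generating polynomial of the
  difference of the two sides vanishes off finitely many lines, so all matrix entries agree.
*)

section \<open>Generating polynomials of vectors in V \<otimes> V\<close>

definition gen_poly :: "nat \<Rightarrow> (nat \<Rightarrow> nat \<Rightarrow> complex) \<Rightarrow> complex \<Rightarrow> complex \<Rightarrow> complex" where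
  "gen_poly N c x y = (\<Sum>k<N. \<Sum>l<N. c k l * x^k * y^l)"

definition apply_op :: "nat \<Rightarrow> (nat \<Rightarrow> nat \<Rightarrow> nat \<Rightarrow> nat \<Rightarrow> complex) \<Rightarrow> (nat \<Rightarrow> nat \<Rightarrow> complex)
    \<Rightarrow> (nat \<Rightarrow> nat \<Rightarrow> complex)" where
  "apply_op N A c = (\<lambda>k l. \<Sum>i<N. \<Sum>j<N. c i j * A i j k l)"

lemma apply_op_comp: "apply_op N (op_comp N A B) c = apply_op N A (apply_op N B c)"
proof (intro ext)
  fix k l
  have "apply_op N (op_comp N A B) c k l
      = (\<Sum>i<N. \<Sum>j<N. \<Sum>m<N. \<Sum>n<N. c i j * B i j m n * A m n k l)"
    by (simp add: apply_op_def op_comp_def sum_distrib_left mult.assoc)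
  also have "\<dots> = (\<Sum>i<N. \<Sum>m<N. \<Sum>j<N. \<Sum>n<N. c i j * B i j m n * A m n k l)"
    by (rule sum.cong[OF refl], rule sum.swap)
  also have "\<dots> = (\<Sum>m<N. \<Sum>i<N. \<Sum>j<N. \<Sum>n<N. c i j * B i j m n * A m n k l)"
    by (rule sum.swap)
  also have "\<dots> = (\<Sum>m<N. \<Sum>i<N. \<Sum>n<N. \<Sum>j<N. c i j * B i j m n * A m n k l)"
    by (rule sum.cong[OF refl], rule sum.cong[OF refl], rule sum.swap)
  also have "\<dots> = (\<Sum>m<N. \<Sum>n<N. \<Sum>i<N. \<Sum>j<N. c i j * B i j m n * A m n k l)"
    by (rule sum.cong[OF refl], rule sum.swap)
  also have "\<dots> = apply_op N A (apply_op N B c) k l"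
    by (simp add: apply_op_def sum_distrib_right)
  finally show "apply_op N (op_comp N A B) c k l = apply_op N A (apply_op N B c) k l" .
qed


lemma gen_poly_apply_op:
  "gen_poly N (apply_op N A c) x y = (\<Sum>i<N. \<Sum>j<N. c i j * (\<Sum>k<N. \<Sum>l<N. A i j k l * x^k * y^l))"
proof -
  have "gen_poly N (apply_op N A c) x y = (\<Sum>k<N. \<Sum>l<N. \<Sum>i<N. \<Sum>j<N. c i j * A i j k l * x^k * y^l)"
    by (simp add: gen_poly_def apply_op_def sum_distrib_right)
  also have "\<dots> = (\<Sum>k<N. \<Sum>i<N. \<Sum>l<N. \<Sum>j<N. c i j * A i j k l * x^k * y^l)"
    by (rule sum.cong[OF refl], rule sum.swap)
  also have "\<dots> = (\<Sum>i<N. \<Sum>k<N. \<Sum>l<N. \<Sum>j<N. c i j * A i j k l * x^k * y^l)"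
    by (rule sum.swap)
  also have "\<dots> = (\<Sum>i<N. \<Sum>k<N. \<Sum>j<N. \<Sum>l<N. c i j * A i j k l * x^k * y^l)"
    by (rule sum.cong[OF refl], rule sum.cong[OF refl], rule sum.swap)
  also have "\<dots> = (\<Sum>i<N. \<Sum>j<N. \<Sum>k<N. \<Sum>l<N. c i j * A i j k l * x^k * y^l)"
    by (rule sum.cong[OF refl], rule sum.swap)
  also have "\<dots> = (\<Sum>i<N. \<Sum>j<N. c i j * (\<Sum>k<N. \<Sum>l<N. A i j k l * x^k * y^l))"
    by (simp add: sum_distrib_left mult.assoc)
  finally show ?thesis .
qed

text \<open>Every operator below acts on a monomial x^i y^j by a combination of two monomials; by
  linearity the generating polynomial transforms by the same rule.\<close>

lemma gen_poly_two_monomials: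
  "(\<Sum>i<N. \<Sum>j<N. c i j * (A * (x^i * y^j) + B * (x'^i * y'^j)))
     = A * gen_poly N c x y + B * gen_poly N c x' y'"
  by (simp add: gen_poly_def sum_distrib_left sum.distrib algebra_simps)

lemma apply_op_basis:
  assumes "i < N" "j < N"
  shows "apply_op N A (\<lambda>a b. if a = i \<and> b = j then 1 else 0) k l = A i j k l"
proof -
  have "(\<Sum>b<N. (if a = i \<and> b = j then 1 else 0) * A a b k l) = (if a = i then A i j k l else 0)"
    for a using assms(2) by (cases "a = i") (simp_all add: if_distrib[of "\<lambda>t. t * _"] sum.delta cong: if_cong)
  then show ?thesis using assms(1) by (simp add: apply_op_def sum.delta)
qed

lemma poly_zero_cofinite:
  fixes a :: "nat \<Rightarrow> complex"
  assumes "finite B" "\<And>x. x \<notin> B \<Longrightarrow> (\<Sum>k<N. a k * x^k) = 0"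
  shows "\<forall>k<N. a k = 0"
proof -
  define p where "p = (\<Sum>k<N. monom (a k) k)"
  have eval: "poly p x = (\<Sum>k<N. a k * x^k)" for x
    by (simp add: p_def poly_sum poly_monom)
  have "p = 0"
  proof (rule ccontr)
    assume "p \<noteq> 0"
    then have "finite {x. poly p x = 0}" by (rule poly_roots_finite)
    moreover have "UNIV \<subseteq> B \<union> {x. poly p x = 0}" using assms(2) eval by auto
    ultimately show False
      using assms(1) infinite_UNIV_char_0 finite_subset by (metis finite_Un)
  qed
  moreover have "coeff p k = a k" if "k < N" for k
    using that by (simp add: p_def coeff_sum)
  ultimately show ?thesis by auto
qed

lemma gen_poly_zero:
  fixes d :: "nat \<Rightarrow> nat \<Rightarrow> complex"
  assumes "finite Ybad" "\<And>y. y \<notin> Ybad \<Longrightarrow> \<exists>Xbad. finite Xbad \<and> (\<forall>x. x \<notin> Xbad \<longrightarrow> gen_poly N d x y = 0)"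
  shows "\<forall>k<N. \<forall>l<N. d k l = 0"
proof -
  have row: "\<forall>k<N. (\<Sum>l<N. d k l * y^l) = 0" if y: "y \<notin> Ybad" for y
  proof -
    obtain Xbad where "finite Xbad" "\<forall>x. x \<notin> Xbad \<longrightarrow> gen_poly N d x y = 0"
      using assms(2)[OF y] by blast
    moreover have "gen_poly N d x y = (\<Sum>k<N. (\<Sum>l<N. d k l * y^l) * x^k)" for x
      by (simp add: gen_poly_def sum_distrib_left sum_distrib_right mult_ac)
    ultimately show ?thesis
      using poly_zero_cofinite[where B=Xbad and N=N and a="\<lambda>k. \<Sum>l<N. d k l * y^l"] by auto
  qed
  show ?thesis
    using poly_zero_cofinite[OF assms(1), where N=N] row by blast
qed


section \<open>The rows of R and K as generating functions\<close>

lemma telescoping: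
  fixes u y :: complex
  assumes "i \<le> j"
  shows "(u - y) * (\<Sum>k=Suc i..j. u^k * y^(i+j-k)) = u^(j+1) * y^i - u^(i+1) * y^j"
  using assms
proof (induction j rule: dec_induct)
  case base
  then show ?case by simp
next
  case (step j)
  have shift: "(\<Sum>k=Suc i..j. u^k * y^(i + Suc j - k)) = y * (\<Sum>k=Suc i..j. u^k * y^(i+j-k))"
    unfolding sum_distrib_left
  proof (rule sum.cong[OF refl])
    fix k assume "k \<in> {Suc i..j}"
    then have "i + Suc j - k = Suc (i + j - k)" by auto
    then show "u^k * y^(i + Suc j - k) = y * (u^k * y^(i+j-k))" by simp
  qed
  have "(\<Sum>k=Suc i..Suc j. u^k * y^(i + Suc j - k))
      = (\<Sum>k=Suc i..j. u^k * y^(i + Suc j - k)) + u^(Suc j) * y^i"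
    using step.hyps by (simp add: sum.cl_ivl_Suc)
  also have "\<dots> = y * (\<Sum>k=Suc i..j. u^k * y^(i+j-k)) + u^(Suc j) * y^i"
    by (simp only: shift)
  finally have "(u - y) * (\<Sum>k=Suc i..Suc j. u^k * y^(i + Suc j - k))
      = y * ((u - y) * (\<Sum>k=Suc i..j. u^k * y^(i+j-k))) + (u - y) * u^(Suc j) * y^i"
    by (simp add: algebra_simps)
  also have "\<dots> = y * (u^(j+1) * y^i - u^(i+1) * y^j) + (u - y) * u^(Suc j) * y^i"
    using step.IH by simp
  also have "\<dots> = u^(Suc j + 1) * y^i - u^(i+1) * y^(Suc j)"
    by (simp add: algebra_simps)
  finally show ?case .
qed

lemma sum_indicator_subset:
  fixes g :: "nat \<Rightarrow> complex"
  assumes "A \<subseteq> {..<N}"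
  shows "(\<Sum>k<N. if k \<in> A then g k else 0) = sum g A"
  using assms by (simp add: sum.inter_restrict[symmetric] Int_absorb1)

text \<open>The scaling factors of R and K only shift the variables of the generating function.\<close>

lemma powi_weight:
  fixes c u :: complex
  assumes "c \<noteq> 0"
  shows "c powi (int j - int k) * (c * u)^k = c^j * u^k"
  using assms by (simp add: power_int_diff power_mult_distrib)

text \<open>The constants appearing in R: \<open>R_a q\<close> on the diagonal terms, \<open>R_b z\<close> on the flip terms.\<close>

definition R_a :: "complex \<Rightarrow> complex" where
  "R_a q = - inverse q / (q - inverse q)"

definition R_b :: "complex \<Rightarrow> complex" where
  "R_b z = inverse z / (z - inverse z)"

text \<open>The entries of R strictly between i and j (with signs), which telescope.\<close>

definition R_jump :: "nat \<Rightarrow> nat \<Rightarrow> nat \<Rightarrow> nat \<Rightarrow> complex" where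
  "R_jump i j k l = (if i < j \<and> i < k \<and> k \<le> j \<and> k + l = i + j then 1
     else if j < i \<and> j < k \<and> k \<le> i \<and> k + l = i + j then -1 else 0)"

definition R_core :: "complex \<Rightarrow> complex \<Rightarrow> nat \<Rightarrow> nat \<Rightarrow> nat \<Rightarrow> nat \<Rightarrow> complex" where
  "R_core q z i j k l = R_a q * (if k = i \<and> l = j then 1 else 0)
     + R_b z * (if k = j \<and> l = i then 1 else 0) + R_jump i j k l"

lemma CG_R_decomp:
  assumes "q \<noteq> 0" "q^2 \<noteq> 1" "zeta lam - inverse (zeta lam) \<noteq> 0"
  shows "CG_R q p lam i j k l = p powi (2 * (int j - int k)) * R_core q (zeta lam) i j k l"
proof -
  define z where "z = zeta lam"
  have z0: "z \<noteq> 0" by (simp add: z_def zeta_def)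
  have qq: "q * q - 1 \<noteq> 0" using assms(2) by (simp add: power2_eq_square)
  have zz: "z * z - 1 \<noteq> 0" using assms(3) z0 by (auto simp: z_def[symmetric] field_simps)
  have q1: "q - inverse q = (q * q - 1) / q" and z1: "z - inverse z = (z * z - 1) / z"
    using assms(1) z0 by (simp_all add: field_simps)
  have diag: "(q * inverse z - inverse q * z) / ((q - inverse q) * (z - inverse z)) = R_a q + R_b z"
    unfolding R_a_def R_b_def q1 z1 using assms(1) z0 qq zz by (simp add: divide_simps)
  have sq: "- (q powi 1) / (q - inverse q) = R_a q - 1" "- (q powi (-1)) / (q - inverse q) = R_a q"
    using assms(1) qq by (auto simp: R_a_def q1 field_simps power_int_minus)
  have sz: "z powi 1 / (z - inverse z) = R_b z + 1" "z powi (-1) / (z - inverse z) = R_b z"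
    using z0 zz by (auto simp: R_b_def z1 field_simps power_int_minus)
  show ?thesis
    unfolding CG_R_def Let_def R_core_def R_jump_def z_def[symmetric]
    using diag sq sz by (auto simp: sgn_if)
qed

lemma R_jump_sum:
  fixes u y :: complex
  assumes "i < N" "j < N"
  shows "(u - y) * (\<Sum>k<N. \<Sum>l<N. R_jump i j k l * (u^k * y^l)) = u^(j+1) * y^i - u^(i+1) * y^j"
proof -
  have inner: "(\<Sum>l<N. R_jump i j k l * (u^k * y^l))
      = (if k \<in> {Suc i..j} then u^k * y^(i+j-k) else 0) - (if k \<in> {Suc j..i} then u^k * y^(j+i-k) else 0)"
    for k
  proof -
    have "(\<Sum>l<N. R_jump i j k l * (u^k * y^l))
        = (\<Sum>l<N. if k \<in> {Suc i..j} \<and> l = i+j-k then u^k * y^l else 0)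
          - (\<Sum>l<N. if k \<in> {Suc j..i} \<and> l = j+i-k then u^k * y^l else 0)"
      by (simp add: sum_subtractf[symmetric]) (rule sum.cong, auto simp: R_jump_def)
    also have "(\<Sum>l<N. if k \<in> {Suc i..j} \<and> l = i+j-k then u^k * y^l else 0)
        = (if k \<in> {Suc i..j} then u^k * y^(i+j-k) else 0)"
      using assms by (cases "k \<in> {Suc i..j}") (auto simp: sum.delta')
    also have "(\<Sum>l<N. if k \<in> {Suc j..i} \<and> l = j+i-k then u^k * y^l else 0)
        = (if k \<in> {Suc j..i} then u^k * y^(j+i-k) else 0)"
      using assms by (cases "k \<in> {Suc j..i}") (auto simp: sum.delta')
    finally show ?thesis .
  qed
  have "(\<Sum>k<N. \<Sum>l<N. R_jump i j k l * (u^k * y^l))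
      = (\<Sum>k=Suc i..j. u^k * y^(i+j-k)) - (\<Sum>k=Suc j..i. u^k * y^(j+i-k))"
  proof -
    have "{Suc i..j} \<subseteq> {..<N}" "{Suc j..i} \<subseteq> {..<N}" using assms by auto
    then show ?thesis by (simp only: inner sum_subtractf sum_indicator_subset)
  qed
  moreover have "(u - y) * ((\<Sum>k=Suc i..j. u^k * y^(i+j-k)) - (\<Sum>k=Suc j..i. u^k * y^(j+i-k)))
      = u^(j+1) * y^i - u^(i+1) * y^j"
  proof (cases "i \<le> j")
    case True
    then show ?thesis using telescoping[OF True, of u y] by simp
  next
    case False
    then show ?thesis using telescoping[of j i u y] by (simp add: algebra_simps)
  qed
  ultimately show ?thesis by simp
qed

lemma sum_indicator_pair:
  fixes f :: "nat \<Rightarrow> nat \<Rightarrow> complex"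
  assumes "i < N" "j < N"
  shows "(\<Sum>k<N. \<Sum>l<N. (if k = i \<and> l = j then 1 else 0) * f k l) = f i j"
proof -
  have "(\<Sum>l<N. (if k = i \<and> l = j then 1 else 0) * f k l) = (if k = i then f k j else 0)" for k
    using assms(2) by (cases "k = i") (simp_all add: if_distrib[of "\<lambda>t. t * _"] sum.delta cong: if_cong)
  then show ?thesis using assms(1) by (simp add: sum.delta)
qed

lemma R_row_sum:
  fixes u y :: complex
  assumes "i < N" "j < N" "q \<noteq> 0" "q^2 \<noteq> 1" "zeta lam - inverse (zeta lam) \<noteq> 0" "p \<noteq> 0" "u \<noteq> y"
  shows "(\<Sum>k<N. \<Sum>l<N. CG_R q p lam i j k l * (p^2 * u)^k * y^l)
     = (R_a q - u / (u - y)) * (u^i * (p^2 * y)^j) + (R_b (zeta lam) + u / (u - y)) * (y^i * (p^2 * u)^j)"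
proof -
  define z where "z = zeta lam"
  have entry: "CG_R q p lam i j k l * (p^2 * u)^k * y^l = p^(2*j) * (R_core q z i j k l * (u^k * y^l))"
    for k l
  proof -
    have "p powi (2 * (int j - int k)) = (p^2) powi (int j - int k)"
      by (simp only: power_int_mult) simp
    then have "p powi (2 * (int j - int k)) * (p^2 * u)^k = p^(2*j) * u^k"
      using powi_weight[of "p^2" j k u] assms(6) by (simp add: power_mult)
    then show ?thesis
      unfolding CG_R_decomp[OF assms(3-5)] z_def by (simp only: mult_ac)
  qed
  have jump: "(\<Sum>k<N. \<Sum>l<N. R_jump i j k l * (u^k * y^l)) = (u^(j+1) * y^i - u^(i+1) * y^j) / (u - y)"
    using R_jump_sum[OF assms(1,2), of u y] assms(7) by (simp add: eq_divide_eq mult.commute)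
  have "(\<Sum>k<N. \<Sum>l<N. CG_R q p lam i j k l * (p^2 * u)^k * y^l)
      = p^(2*j) * (R_a q * (\<Sum>k<N. \<Sum>l<N. (if k = i \<and> l = j then 1 else 0) * (u^k * y^l))
          + R_b z * (\<Sum>k<N. \<Sum>l<N. (if k = j \<and> l = i then 1 else 0) * (u^k * y^l))
          + (\<Sum>k<N. \<Sum>l<N. R_jump i j k l * (u^k * y^l)))"
    unfolding entry R_core_def
    by (simp only: sum_distrib_left[symmetric] sum.distrib distrib_right mult.assoc)
  also have "\<dots> = p^(2*j) * (R_a q * (u^i * y^j) + R_b z * (u^j * y^i)
      + (u^(j+1) * y^i - u^(i+1) * y^j) / (u - y))"
    by (simp only: sum_indicator_pair[OF assms(1,2)] sum_indicator_pair[OF assms(2,1)] jump)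
  also have "\<dots> = (R_a q - u / (u - y)) * (u^i * (p^2 * y)^j) + (R_b z + u / (u - y)) * (y^i * (p^2 * u)^j)"
    using assms(7) by (simp add: divide_simps power_mult_distrib power_mult) (simp add: algebra_simps)
  finally show ?thesis unfolding z_def .
qed

definition K_a :: "complex \<Rightarrow> complex" where
  "K_a z = - inverse (z^2) / (z^2 - inverse (z^2))"

definition K_b :: "complex \<Rightarrow> complex" where
  "K_b r = - r / (r - inverse r)"

definition K_jump :: "nat \<Rightarrow> nat \<Rightarrow> nat \<Rightarrow> complex" where
  "K_jump n j k = (if j < n - j \<and> j < k \<and> k \<le> n - j then 1
     else if n - j < j \<and> n - j < k \<and> k \<le> j then -1 else 0)"

definition K_core :: "nat \<Rightarrow> complex \<Rightarrow> complex \<Rightarrow> nat \<Rightarrow> nat \<Rightarrow> complex" where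
  "K_core N r z j k = K_a z * (if k = j then 1 else 0) + K_b r * (if k = N - 1 - j then 1 else 0)
     + K_jump (N - 1) j k"

lemma CG_K_entries:
  assumes "j < N" "r \<noteq> 0" "r^2 \<noteq> 1" "(zeta lam)^2 - inverse ((zeta lam)^2) \<noteq> 0"
  shows "CG_K N r s lam j k = s powi (int j - int k) *
     (if k = j \<and> 2 * j = N - 1 then K_a (zeta lam) + K_b r
      else if k = j then (if 2 * j < N - 1 then K_a (zeta lam) else K_a (zeta lam) - 1)
      else if k = N - 1 - j then (if 2 * j < N - 1 then K_b r + 1 else K_b r)
      else if min j (N - 1 - j) < k \<and> k < max j (N - 1 - j) then (if 2 * j < N - 1 then 1 else -1)
      else 0)"
proof -
  define z where "z = zeta lam"
  have z0: "z \<noteq> 0" by (simp add: z_def zeta_def)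
  have rr: "r * r - 1 \<noteq> 0" using assms(3) by (simp add: power2_eq_square)
  have zz: "z^2 * z^2 - 1 \<noteq> 0" using assms(4) z0 by (auto simp: z_def[symmetric] field_simps)
  have r1: "r - inverse r = (r * r - 1) / r" and z1: "z^2 - inverse (z^2) = (z^2 * z^2 - 1) / z^2"
    using assms(2) z0 by (simp_all add: field_simps)
  have sr: "- (r powi 1) / (r - inverse r) = K_b r" "- (r powi (-1)) / (r - inverse r) = K_b r + 1"
    using assms(2) rr by (auto simp: K_b_def r1 field_simps power_int_minus)
  have sz: "- (z powi (2 * 1)) / (z^2 - inverse (z^2)) = K_a z - 1"
    "- (z powi (2 * -1)) / (z^2 - inverse (z^2)) = K_a z"
    unfolding K_a_def z1 using z0 zz by (simp_all add: divide_simps power_int_minus power2_eq_square)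
  have mid: "(inverse r * inverse (z^2) - r * z^2) / ((r - inverse r) * (z^2 - inverse (z^2))) = K_a z + K_b r"
    unfolding K_a_def K_b_def r1 z1 using assms(2) z0 rr zz
    by (simp add: divide_simps) (simp add: algebra_simps power2_eq_square power4_eq_xxxx)
  have I1: "(2 * int j = int N - 1) = (2 * j = N - 1)" using assms(1) by linarith
  have I2: "(int k = int N - 1 - int j) = (k = N - 1 - j)" using assms(1) by linarith
  have I3: "sgn (2 * int j - int N + 1) = (if 2 * j < N - 1 then -1 else if 2 * j = N - 1 then 0 else 1)"
    using assms(1) by (simp add: sgn_if) linarith
  have I4: "(min (int j) (int N - 1 - int j) < int k \<and> int k < max (int j) (int N - 1 - int j))
      = (min j (N - 1 - j) < k \<and> k < max j (N - 1 - j))"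
    using assms(1) by (auto simp: min_def max_def)
  have I5: "sgn (int N - 1 - 2 * int j) = (if 2 * j < N - 1 then 1 else if 2 * j = N - 1 then 0 else -1)"
    using assms(1) by (simp add: sgn_if) linarith
  show ?thesis
  proof (cases "2 * j = N - 1")
    case True
    then have "N - 1 - j = j" by simp
    then show ?thesis
      unfolding CG_K_def Let_def z_def[symmetric] I1 I2 I3 I4 I5 using sr sz mid True by simp
  next
    case False
    then show ?thesis
      unfolding CG_K_def Let_def z_def[symmetric] I1 I2 I3 I4 I5 using sr sz mid by simp
  qed
qed

lemma CG_K_decomp:
  assumes "j < N" "r \<noteq> 0" "r^2 \<noteq> 1" "(zeta lam)^2 - inverse ((zeta lam)^2) \<noteq> 0"
  shows "CG_K N r s lam j k = s powi (int j - int k) * K_core N r (zeta lam) j k"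
  unfolding CG_K_entries[OF assms] K_core_def K_jump_def using assms(1)
  by (cases "k = j"; cases "2 * j < N - 1"; cases "2 * j = N - 1"; cases "k = N - 1 - j";
      auto simp: min_def max_def)

lemma K_jump_sum:
  fixes w :: complex
  assumes "j < N"
  shows "(w - 1) * (\<Sum>k<N. K_jump (N - 1) j k * w^k) = w^(N - 1 - j + 1) - w^(j + 1)"
proof -
  have "(\<Sum>k<N. K_jump (N - 1) j k * w^k)
      = (\<Sum>k<N. if k \<in> {Suc j..N-1-j} then w^k else 0) - (\<Sum>k<N. if k \<in> {Suc (N-1-j)..j} then w^k else 0)"
    by (simp only: sum_subtractf[symmetric]) (rule sum.cong, auto simp: K_jump_def)
  also have "\<dots> = (\<Sum>k=Suc j..N-1-j. w^k) - (\<Sum>k=Suc (N-1-j)..j. w^k)"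
  proof -
    have "{Suc j..N-1-j} \<subseteq> {..<N}" "{Suc (N-1-j)..j} \<subseteq> {..<N}" using assms by auto
    then show ?thesis by (simp only: sum_indicator_subset)
  qed
  finally have split: "(\<Sum>k<N. K_jump (N - 1) j k * w^k)
      = (\<Sum>k=Suc j..N-1-j. w^k) - (\<Sum>k=Suc (N-1-j)..j. w^k)" .
  show ?thesis
  proof (cases "j \<le> N - 1 - j")
    case True
    then show ?thesis using split telescoping[OF True, of w 1] by (simp add: right_diff_distrib)
  next
    case False
    then have "N - 1 - j \<le> j" by simp
    then show ?thesis using split telescoping[of "N - 1 - j" j w 1] False
      by (simp add: right_diff_distrib)
  qed
qed

lemma K_row_sum:
  fixes w :: complex
  assumes "j < N" "r \<noteq> 0" "r^2 \<noteq> 1" "(zeta lam)^2 - inverse ((zeta lam)^2) \<noteq> 0"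
    and "s \<noteq> 0" "w \<noteq> 0" "w \<noteq> 1"
  shows "(\<Sum>k<N. CG_K N r s lam j k * (s * w)^k)
     = (K_a (zeta lam) + w / (1 - w)) * (s * w)^j
       + w^(N - 1) * (K_b r - w / (1 - w)) * (s * inverse w)^j"
proof -
  define z where "z = zeta lam"
  have w1: "w - 1 \<noteq> 0" using assms(7) by simp
  have entry: "CG_K N r s lam j k * (s * w)^k = s^j * (K_core N r z j k * w^k)" for k
  proof -
    have "CG_K N r s lam j k * (s * w)^k = (s powi (int j - int k) * (s * w)^k) * K_core N r z j k"
      unfolding CG_K_decomp[OF assms(1-4)] z_def by (simp only: mult_ac)
    then show ?thesis unfolding powi_weight[OF assms(5)] by (simp only: mult_ac)
  qed
  have jump: "(\<Sum>k<N. K_jump (N - 1) j k * w^k) = (w^(N - 1 - j + 1) - w^(j + 1)) / (w - 1)"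
    using K_jump_sum[OF assms(1), of w] w1 by (simp add: eq_divide_eq mult.commute)
  have "(\<Sum>k<N. CG_K N r s lam j k * (s * w)^k)
      = s^j * (K_a z * (\<Sum>k<N. (if k = j then 1 else 0) * w^k)
          + K_b r * (\<Sum>k<N. (if k = N - 1 - j then 1 else 0) * w^k)
          + (\<Sum>k<N. K_jump (N - 1) j k * w^k))"
    unfolding entry K_core_def
    by (simp only: sum_distrib_left[symmetric] sum.distrib distrib_right mult.assoc)
  also have "\<dots> = s^j * (K_a z * w^j + K_b r * w^(N - 1 - j) + (w^(N - 1 - j + 1) - w^(j + 1)) / (w - 1))"
  proof -
    have "(\<Sum>k<N. (if k = j then 1 else 0) * w^k) = w^j"
      "(\<Sum>k<N. (if k = N - 1 - j then 1 else 0) * w^k) = w^(N - 1 - j)"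
      using assms(1) by (simp_all add: if_distrib[of "\<lambda>t. t * _"] sum.delta cong: if_cong)
    then show ?thesis by (simp only: jump)
  qed
  also have "\<dots> = (K_a z + w / (1 - w)) * (s * w)^j + w^(N - 1) * (K_b r - w / (1 - w)) * (s * inverse w)^j"
  proof -
    define m where "m = N - 1 - j"
    have "N - 1 = m + j" using assms(1) by (simp add: m_def)
    then show ?thesis
      unfolding m_def[symmetric] using assms(5,6) w1
      by (simp add: divide_simps power_mult_distrib power_add power_inverse)
        (simp add: algebra_simps)
  qed
  finally show ?thesis unfolding z_def .
qed

section \<open>Realisation of R and K as difference operators\<close>

lemma op21_row:
  "(\<Sum>k<N. \<Sum>l<N. op21 A i j k l * x^k * y^l) = (\<Sum>l<N. \<Sum>k<N. A j i l k * y^l * x^k)"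
  unfolding op21_def by (subst sum.swap) (simp add: mult_ac)

lemma op1_row:
  assumes "j < N"
  shows "(\<Sum>k<N. \<Sum>l<N. op1 K i j k l * x^k * y^l) = (\<Sum>k<N. K i k * x^k) * y^j"
  using assms by (simp add: op1_def sum_distrib_right if_distrib[of "\<lambda>t. _ * t"] if_distrib[of "\<lambda>t. t * _"]
      sum.delta cong: if_cong)

lemma op2_row:
  assumes "i < N"
  shows "(\<Sum>k<N. \<Sum>l<N. op2 K i j k l * x^k * y^l) = x^i * (\<Sum>l<N. K j l * y^l)"
proof -
  have "(\<Sum>k<N. \<Sum>l<N. op2 K i j k l * x^k * y^l) = (\<Sum>l<N. \<Sum>k<N. op2 K i j k l * x^k * y^l)"
    by (rule sum.swap)
  also have "\<dots> = (\<Sum>l<N. K j l * x^i * y^l)"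
    using assms by (simp add: op2_def if_distrib[of "\<lambda>t. t * _"] sum.delta cong: if_cong)
  finally show ?thesis by (simp add: sum_distrib_left mult_ac)
qed

definition opR :: "complex \<Rightarrow> complex \<Rightarrow> (complex \<Rightarrow> complex \<Rightarrow> complex) \<Rightarrow> complex \<Rightarrow> complex \<Rightarrow> complex" where
  "opR a b f X Y = (a - X / (X - Y)) * f X Y + (b + X / (X - Y)) * f Y X"

definition opR21 :: "complex \<Rightarrow> complex \<Rightarrow> (complex \<Rightarrow> complex \<Rightarrow> complex) \<Rightarrow> complex \<Rightarrow> complex \<Rightarrow> complex" where
  "opR21 a b f X Y = (a - Y / (Y - X)) * f X Y + (b + Y / (Y - X)) * f Y X"

definition opK1 :: "complex \<Rightarrow> complex \<Rightarrow> nat \<Rightarrow> (complex \<Rightarrow> complex \<Rightarrow> complex) \<Rightarrow> complex \<Rightarrow> complex \<Rightarrow> complex" where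
  "opK1 al be n f X Y = (al + X / (1 - X)) * f X Y + X^n * (be - X / (1 - X)) * f (inverse X) Y"

definition opK2 :: "complex \<Rightarrow> complex \<Rightarrow> nat \<Rightarrow> (complex \<Rightarrow> complex \<Rightarrow> complex) \<Rightarrow> complex \<Rightarrow> complex \<Rightarrow> complex" where
  "opK2 al be n f X Y = (al + Y / (1 - Y)) * f X Y + Y^n * (be - Y / (1 - Y)) * f X (inverse Y)"

text \<open>Two normalisations of the generating polynomial, with P = p^2. R maps the second one to the
  first, R_21 the first to the second; K_2 preserves the first and K_1 the second. In these
  variables the parameters p and s disappear from the difference operators.\<close>

definition gf1 :: "nat \<Rightarrow> complex \<Rightarrow> complex \<Rightarrow> (nat \<Rightarrow> nat \<Rightarrow> complex) \<Rightarrow> complex \<Rightarrow> complex \<Rightarrow> complex" where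
  "gf1 N P s c X Y = gen_poly N c (P * s * X) (s * Y)"

definition gf2 :: "nat \<Rightarrow> complex \<Rightarrow> complex \<Rightarrow> (nat \<Rightarrow> nat \<Rightarrow> complex) \<Rightarrow> complex \<Rightarrow> complex \<Rightarrow> complex" where
  "gf2 N P s c X Y = gen_poly N c (s * X) (P * s * Y)"

lemma gf1_apply_R:
  assumes "q \<noteq> 0" "q^2 \<noteq> 1" "zeta lam - inverse (zeta lam) \<noteq> 0" "p \<noteq> 0" "s \<noteq> 0" "X \<noteq> Y"
  shows "gf1 N (p^2) s (apply_op N (CG_R q p lam) c) X Y
       = opR (R_a q) (R_b (zeta lam)) (gf2 N (p^2) s c) X Y"
proof -
  have sXY: "s * X \<noteq> s * Y" using assms(5,6) by simp
  have frac: "(s * X) / (s * X - s * Y) = X / (X - Y)"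
    using assms(5) by (simp add: right_diff_distrib[symmetric])
  have "gf1 N (p^2) s (apply_op N (CG_R q p lam) c) X Y
      = (\<Sum>i<N. \<Sum>j<N. c i j * (\<Sum>k<N. \<Sum>l<N. CG_R q p lam i j k l * (p^2 * (s * X))^k * (s * Y)^l))"
    unfolding gf1_def gen_poly_apply_op by (simp only: mult.assoc)
  also have "\<dots> = (\<Sum>i<N. \<Sum>j<N. c i j * ((R_a q - X / (X - Y)) * ((s * X)^i * (p^2 * (s * Y))^j)
      + (R_b (zeta lam) + X / (X - Y)) * ((s * Y)^i * (p^2 * (s * X))^j)))"
    by (intro sum.cong refl) (simp add: R_row_sum[OF _ _ assms(1-4) sXY] frac)
  also have "\<dots> = opR (R_a q) (R_b (zeta lam)) (gf2 N (p^2) s c) X Y"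
    unfolding gen_poly_two_monomials opR_def gf2_def by (simp only: mult.assoc)
  finally show ?thesis .
qed

lemma gf2_apply_R21:
  assumes "q \<noteq> 0" "q^2 \<noteq> 1" "zeta lam - inverse (zeta lam) \<noteq> 0" "p \<noteq> 0" "s \<noteq> 0" "X \<noteq> Y"
  shows "gf2 N (p^2) s (apply_op N (op21 (CG_R q p lam)) c) X Y
       = opR21 (R_a q) (R_b (zeta lam)) (gf1 N (p^2) s c) X Y"
proof -
  have sYX: "s * Y \<noteq> s * X" using assms(5,6) by simp
  have frac: "(s * Y) / (s * Y - s * X) = Y / (Y - X)"
    using assms(5) by (simp add: right_diff_distrib[symmetric])
  have "gf2 N (p^2) s (apply_op N (op21 (CG_R q p lam)) c) X Y
      = (\<Sum>i<N. \<Sum>j<N. c i j * (\<Sum>l<N. \<Sum>k<N. CG_R q p lam j i l k * (p^2 * (s * Y))^l * (s * X)^k))"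
    unfolding gf2_def gen_poly_apply_op op21_row by (simp only: mult.assoc)
  also have "\<dots> = (\<Sum>i<N. \<Sum>j<N. c i j * ((R_a q - Y / (Y - X)) * ((p^2 * (s * X))^i * (s * Y)^j)
      + (R_b (zeta lam) + Y / (Y - X)) * ((p^2 * (s * Y))^i * (s * X)^j)))"
  proof (intro sum.cong refl)
    fix i j assume "i \<in> {..<N}" "j \<in> {..<N}"
    then show "c i j * (\<Sum>l<N. \<Sum>k<N. CG_R q p lam j i l k * (p^2 * (s * Y))^l * (s * X)^k)
      = c i j * ((R_a q - Y / (Y - X)) * ((p^2 * (s * X))^i * (s * Y)^j)
          + (R_b (zeta lam) + Y / (Y - X)) * ((p^2 * (s * Y))^i * (s * X)^j))"
      by (simp only: lessThan_iff R_row_sum[OF _ _ assms(1-4) sYX] frac) (simp only: mult_ac)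
  qed
  also have "\<dots> = opR21 (R_a q) (R_b (zeta lam)) (gf1 N (p^2) s c) X Y"
    unfolding gen_poly_two_monomials opR21_def gf1_def by (simp only: mult.assoc)
  finally show ?thesis .
qed

lemma gf2_apply_K1:
  assumes "r \<noteq> 0" "r^2 \<noteq> 1" "(zeta lam)^2 - inverse ((zeta lam)^2) \<noteq> 0" "s \<noteq> 0" "X \<noteq> 0" "X \<noteq> 1"
  shows "gf2 N P s (apply_op N (op1 (CG_K N r s lam)) c) X Y
       = opK1 (K_a (zeta lam)) (K_b r) (N - 1) (gf2 N P s c) X Y"
proof -
  have "gf2 N P s (apply_op N (op1 (CG_K N r s lam)) c) X Y
      = (\<Sum>i<N. \<Sum>j<N. c i j * ((\<Sum>k<N. CG_K N r s lam i k * (s * X)^k) * (P * s * Y)^j))"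
    unfolding gf2_def gen_poly_apply_op by (intro sum.cong refl) (simp add: op1_row)
  also have "\<dots> = (\<Sum>i<N. \<Sum>j<N. c i j * ((K_a (zeta lam) + X / (1 - X)) * ((s * X)^i * (P * s * Y)^j)
      + X^(N - 1) * (K_b r - X / (1 - X)) * ((s * inverse X)^i * (P * s * Y)^j)))"
    by (intro sum.cong refl) (simp only: lessThan_iff K_row_sum[OF _ assms] distrib_right mult.assoc)
  also have "\<dots> = opK1 (K_a (zeta lam)) (K_b r) (N - 1) (gf2 N P s c) X Y"
    unfolding gen_poly_two_monomials opK1_def gf2_def ..
  finally show ?thesis .
qed

lemma gf1_apply_K2:
  assumes "r \<noteq> 0" "r^2 \<noteq> 1" "(zeta lam)^2 - inverse ((zeta lam)^2) \<noteq> 0" "s \<noteq> 0" "Y \<noteq> 0" "Y \<noteq> 1"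
  shows "gf1 N P s (apply_op N (op2 (CG_K N r s lam)) c) X Y
       = opK2 (K_a (zeta lam)) (K_b r) (N - 1) (gf1 N P s c) X Y"
proof -
  have "gf1 N P s (apply_op N (op2 (CG_K N r s lam)) c) X Y
      = (\<Sum>i<N. \<Sum>j<N. c i j * ((P * s * X)^i * (\<Sum>l<N. CG_K N r s lam j l * (s * Y)^l)))"
    unfolding gf1_def gen_poly_apply_op by (intro sum.cong refl) (simp add: op2_row)
  also have "\<dots> = (\<Sum>i<N. \<Sum>j<N. c i j * ((K_a (zeta lam) + Y / (1 - Y)) * ((P * s * X)^i * (s * Y)^j)
      + Y^(N - 1) * (K_b r - Y / (1 - Y)) * ((P * s * X)^i * (s * inverse Y)^j)))"
    by (intro sum.cong refl) (simp only: lessThan_iff K_row_sum[OF _ assms] distrib_left, simp only: mult_ac)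
  also have "\<dots> = opK2 (K_a (zeta lam)) (K_b r) (N - 1) (gf1 N P s c) X Y"
    unfolding gen_poly_two_monomials opK2_def gf1_def ..
  finally show ?thesis .
qed

section \<open>Composing the realisations\<close>

definition generic :: "complex \<Rightarrow> complex \<Rightarrow> bool" where
  "generic X Y \<longleftrightarrow> X \<noteq> 0 \<and> Y \<noteq> 0 \<and> X \<noteq> 1 \<and> Y \<noteq> 1 \<and> X \<noteq> Y \<and> X * Y \<noteq> 1"

lemma generic_swap: "generic X Y \<Longrightarrow> generic Y X"
  by (auto simp: generic_def mult.commute)

lemma generic_inverse_left: "generic X Y \<Longrightarrow> generic (inverse X) Y"
  by (auto simp: generic_def field_simps)

lemma generic_inverse_right: "generic X Y \<Longrightarrow> generic X (inverse Y)"
  by (auto simp: generic_def field_simps)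

text \<open>Since the difference operators only
  evaluate their argument at generic points, they preserve this relation, so the realisation
  lemmas can be chained.\<close>

definition agree_generic :: "(complex \<Rightarrow> complex \<Rightarrow> complex) \<Rightarrow> (complex \<Rightarrow> complex \<Rightarrow> complex) \<Rightarrow> bool" where
  "agree_generic f g \<longleftrightarrow> (\<forall>X Y. generic X Y \<longrightarrow> f X Y = g X Y)"

lemma agree_generic_refl: "agree_generic f f"
  by (simp add: agree_generic_def)

lemma agree_R:
  assumes "q \<noteq> 0" "q^2 \<noteq> 1" "zeta lam - inverse (zeta lam) \<noteq> 0" "p \<noteq> 0" "s \<noteq> 0"
    and "agree_generic (gf2 N (p^2) s c) f"
  shows "agree_generic (gf1 N (p^2) s (apply_op N (CG_R q p lam) c)) (opR (R_a q) (R_b (zeta lam)) f)"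
  unfolding agree_generic_def
proof (intro allI impI)
  fix X Y assume g: "generic X Y"
  then have "X \<noteq> Y" by (simp add: generic_def)
  then show "gf1 N (p^2) s (apply_op N (CG_R q p lam) c) X Y = opR (R_a q) (R_b (zeta lam)) f X Y"
    using assms(6) g generic_swap[OF g]
    by (simp add: gf1_apply_R[OF assms(1-5)] opR_def agree_generic_def)
qed

lemma agree_R21:
  assumes "q \<noteq> 0" "q^2 \<noteq> 1" "zeta lam - inverse (zeta lam) \<noteq> 0" "p \<noteq> 0" "s \<noteq> 0"
    and "agree_generic (gf1 N (p^2) s c) f"
  shows "agree_generic (gf2 N (p^2) s (apply_op N (op21 (CG_R q p lam)) c)) (opR21 (R_a q) (R_b (zeta lam)) f)"
  unfolding agree_generic_def
proof (intro allI impI)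
  fix X Y assume g: "generic X Y"
  then have "X \<noteq> Y" by (simp add: generic_def)
  then show "gf2 N (p^2) s (apply_op N (op21 (CG_R q p lam)) c) X Y = opR21 (R_a q) (R_b (zeta lam)) f X Y"
    using assms(6) g generic_swap[OF g]
    by (simp add: gf2_apply_R21[OF assms(1-5)] opR21_def agree_generic_def)
qed

lemma agree_K1:
  assumes "r \<noteq> 0" "r^2 \<noteq> 1" "(zeta lam)^2 - inverse ((zeta lam)^2) \<noteq> 0" "s \<noteq> 0"
    and "agree_generic (gf2 N P s c) f"
  shows "agree_generic (gf2 N P s (apply_op N (op1 (CG_K N r s lam)) c)) (opK1 (K_a (zeta lam)) (K_b r) (N - 1) f)"
  unfolding agree_generic_def
proof (intro allI impI)
  fix X Y assume g: "generic X Y"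
  then have "X \<noteq> 0" "X \<noteq> 1" by (simp_all add: generic_def)
  then show "gf2 N P s (apply_op N (op1 (CG_K N r s lam)) c) X Y = opK1 (K_a (zeta lam)) (K_b r) (N - 1) f X Y"
    using assms(5) g generic_inverse_left[OF g]
    by (simp add: gf2_apply_K1[OF assms(1-4)] opK1_def agree_generic_def)
qed

lemma agree_K2:
  assumes "r \<noteq> 0" "r^2 \<noteq> 1" "(zeta lam)^2 - inverse ((zeta lam)^2) \<noteq> 0" "s \<noteq> 0"
    and "agree_generic (gf1 N P s c) f"
  shows "agree_generic (gf1 N P s (apply_op N (op2 (CG_K N r s lam)) c)) (opK2 (K_a (zeta lam)) (K_b r) (N - 1) f)"
  unfolding agree_generic_def
proof (intro allI impI)
  fix X Y assume g: "generic X Y"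
  then have "Y \<noteq> 0" "Y \<noteq> 1" by (simp_all add: generic_def)
  then show "gf1 N P s (apply_op N (op2 (CG_K N r s lam)) c) X Y = opK2 (K_a (zeta lam)) (K_b r) (N - 1) f X Y"
    using assms(5) g generic_inverse_right[OF g]
    by (simp add: gf1_apply_K2[OF assms(1-4)] opK2_def agree_generic_def)
qed

section \<open>The reflection equation for the difference operators\<close>

text \<open>The only relation between the spectral constants that the reflection equation needs.\<close>

definition spectral_rel :: "complex \<Rightarrow> complex \<Rightarrow> complex \<Rightarrow> complex \<Rightarrow> bool" where
  "spectral_rel al am bm bp \<longleftrightarrow> al * bp + al + am * bp - bp + al * bm - am * bm = 0"

lemma zeta_diff: "zeta (a - b) = zeta a / zeta b"
  unfolding zeta_def by (simp add: right_diff_distrib exp_diff)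

lemma zeta_add: "zeta (a + b) = zeta a * zeta b"
  unfolding zeta_def by (simp add: distrib_left exp_add)

lemma spectral_relation:
  assumes "zeta (lam - mu) - inverse (zeta (lam - mu)) \<noteq> 0"
    and "zeta (lam + mu) - inverse (zeta (lam + mu)) \<noteq> 0"
    and "(zeta lam)^2 - inverse ((zeta lam)^2) \<noteq> 0"
    and "(zeta mu)^2 - inverse ((zeta mu)^2) \<noteq> 0"
  shows "spectral_rel (K_a (zeta lam)) (K_a (zeta mu)) (R_b (zeta (lam - mu))) (R_b (zeta (lam + mu)))"
proof -
  define Z1 Z2 where "Z1 = (zeta lam)^2" and "Z2 = (zeta mu)^2"
  have z0: "zeta lam \<noteq> 0" "zeta mu \<noteq> 0" by (simp_all add: zeta_def)
  have Z12: "Z1 - Z2 \<noteq> 0" "Z1 * Z2 - 1 \<noteq> 0" "Z1^2 - 1 \<noteq> 0" "Z2^2 - 1 \<noteq> 0"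
    using assms z0 unfolding Z1_def Z2_def zeta_diff zeta_add
    by (auto simp: field_simps power2_eq_square)
  have vals: "R_b (zeta (lam - mu)) = Z2 / (Z1 - Z2)" "R_b (zeta (lam + mu)) = 1 / (Z1 * Z2 - 1)"
    "K_a (zeta lam) = -1 / (Z1^2 - 1)" "K_a (zeta mu) = -1 / (Z2^2 - 1)"
    using z0 Z12 unfolding R_b_def K_a_def zeta_diff zeta_add Z1_def Z2_def
    by (simp_all add: divide_simps) (simp_all add: algebra_simps power2_eq_square)
  show ?thesis
    unfolding spectral_rel_def vals using Z12
    by (simp add: divide_simps) (simp add: algebra_simps power2_eq_square)
qed

text \<open>After naming the values of the rational coefficients at the eight points
  (\<plusminus>1 powers of X, Y, in either order) it is a polynomial identity modulo the spectral relation
  and one relation between the coordinate functions K, H, F, G; the method \<open>algebra\<close> finds the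
  certificate.\<close>

theorem functional_reflection_equation:
  fixes f :: "complex \<Rightarrow> complex \<Rightarrow> complex"
  assumes spec: "spectral_rel al am bm bp" and gen: "generic X Y"
  shows "opR a bm (opK1 al be n (opR21 a bp (opK2 am be n f))) X Y
       = opK2 am be n (opR a bp (opK1 al be n (opR21 a bm f))) X Y"
proof -
  from gen have X: "X \<noteq> 0" "X \<noteq> 1" and Y: "Y \<noteq> 0" "Y \<noteq> 1" and XY: "X \<noteq> Y" "X * Y \<noteq> 1"
    by (simp_all add: generic_def)
  define K H F G where "K = X / (1 - X)" and "H = Y / (1 - Y)" and "F = X / (X - Y)"
    and "G = X * Y / (X * Y - 1)"
  have coord: "- K * F + K - K * G - G + H * F - H * G = 0"
    unfolding K_def H_def F_def G_def using X Y XY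
    by (simp add: divide_simps) (simp add: algebra_simps)
  have coeff_values: "X / (X - Y) = F" "Y / (Y - X) = 1 - F" "Y / (Y - inverse X) = G"
    "X / (X - inverse Y) = G" "inverse Y / (inverse Y - X) = 1 - G"
    "inverse Y / (inverse Y - inverse X) = F" "X / (1 - X) = K" "Y / (1 - Y) = H"
    "inverse X / (1 - inverse X) = - (K + 1)" "inverse Y / (1 - inverse Y) = - (H + 1)"
    "inverse X ^ n = inverse (X ^ n)" "inverse Y ^ n = inverse (Y ^ n)"
    unfolding K_def H_def F_def G_def using X Y XY
    by (simp_all add: divide_simps power_inverse) (simp_all add: algebra_simps)
  define Xn iXn Yn iYn where "Xn = X ^ n" and "iXn = inverse Xn" and "Yn = Y ^ n" and "iYn = inverse Yn"
  have inv: "Xn * iXn = 1" "Yn * iYn = 1"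
    using X Y by (simp_all add: Xn_def iXn_def Yn_def iYn_def)
  define v1 v2 v3 v4 v5 v6 v7 v8 where "v1 = f X Y" and "v2 = f X (inverse Y)" and "v3 = f Y X"
    and "v4 = f Y (inverse X)" and "v5 = f (inverse X) Y" and "v6 = f (inverse X) (inverse Y)"
    and "v7 = f (inverse Y) X" and "v8 = f (inverse Y) (inverse X)"
  show ?thesis
    unfolding opR_def opR21_def opK1_def opK2_def inverse_inverse_eq coeff_values
      Xn_def[symmetric] iXn_def[symmetric] Yn_def[symmetric] iYn_def[symmetric]
      v1_def[symmetric] v2_def[symmetric] v3_def[symmetric] v4_def[symmetric]
      v5_def[symmetric] v6_def[symmetric] v7_def[symmetric] v8_def[symmetric]
    using spec[unfolded spectral_rel_def] coord inv by algebra
qed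

section \<open>The reflection equation for R and K\<close>

text \<open>Both sides of the reflection equation, applied to any vector, have the same normalised
  generating function at generic points: chaining the realisations turns each side into the
  corresponding composite of difference operators.\<close>

lemma reflection_agree_generic:
  assumes q0: "q \<noteq> 0" and p0: "p \<noteq> 0" and r0: "r \<noteq> 0" and s0: "s \<noteq> 0"
    and q2: "q^2 \<noteq> 1" and r2: "r^2 \<noteq> 1"
    and zm: "zeta (lam - mu) - inverse (zeta (lam - mu)) \<noteq> 0"
    and zp: "zeta (lam + mu) - inverse (zeta (lam + mu)) \<noteq> 0"
    and zl: "(zeta lam)^2 - inverse ((zeta lam)^2) \<noteq> 0"
    and zu: "(zeta mu)^2 - inverse ((zeta mu)^2) \<noteq> 0"
  shows "agree_generic
    (gf1 N (p^2) s (apply_op N (op_comp N (CG_R q p (lam - mu))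
      (op_comp N (op1 (CG_K N r s lam))
        (op_comp N (op21 (CG_R q p (lam + mu))) (op2 (CG_K N r s mu))))) c))
    (gf1 N (p^2) s (apply_op N (op_comp N (op2 (CG_K N r s mu))
      (op_comp N (CG_R q p (lam + mu))
        (op_comp N (op1 (CG_K N r s lam)) (op21 (CG_R q p (lam - mu)))))) c))"
proof -
  let ?f = "gf1 N (p^2) s c" and ?a = "R_a q" and ?be = "K_b r" and ?n = "N - 1"
  let ?al = "K_a (zeta lam)" and ?am = "K_a (zeta mu)"
  let ?bm = "R_b (zeta (lam - mu))" and ?bp = "R_b (zeta (lam + mu))"
  have lhs: "agree_generic
      (gf1 N (p^2) s (apply_op N (CG_R q p (lam - mu)) (apply_op N (op1 (CG_K N r s lam))
        (apply_op N (op21 (CG_R q p (lam + mu))) (apply_op N (op2 (CG_K N r s mu)) c)))))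
      (opR ?a ?bm (opK1 ?al ?be ?n (opR21 ?a ?bp (opK2 ?am ?be ?n ?f))))"
    by (intro agree_R[OF q0 q2 zm p0 s0] agree_K1[OF r0 r2 zl s0]
        agree_R21[OF q0 q2 zp p0 s0] agree_K2[OF r0 r2 zu s0] agree_generic_refl)
  have rhs: "agree_generic
      (gf1 N (p^2) s (apply_op N (op2 (CG_K N r s mu)) (apply_op N (CG_R q p (lam + mu))
        (apply_op N (op1 (CG_K N r s lam)) (apply_op N (op21 (CG_R q p (lam - mu))) c)))))
      (opK2 ?am ?be ?n (opR ?a ?bp (opK1 ?al ?be ?n (opR21 ?a ?bm ?f))))"
    by (intro agree_K2[OF r0 r2 zu s0] agree_R[OF q0 q2 zp p0 s0]
        agree_K1[OF r0 r2 zl s0] agree_R21[OF q0 q2 zm p0 s0] agree_generic_refl)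
  have "spectral_rel ?al ?am ?bm ?bp"
    by (rule spectral_relation[OF zm zp zl zu])
  then show ?thesis
    using lhs rhs functional_reflection_equation unfolding agree_generic_def apply_op_comp by metis
qed

text \<open>Two operators whose actions on every vector have the same normalised generating function
  at all generic points are equal: the generating polynomial of the difference vanishes
  outside finitely many lines.\<close>

lemma op_eq_of_agree_generic:
  assumes "P \<noteq> 0" "s \<noteq> 0"
    and agree: "\<And>c. agree_generic (gf1 N P s (apply_op N A c)) (gf1 N P s (apply_op N B c))"
    and "i < N" "j < N" "k < N" "l < N"
  shows "A i j k l = B i j k l"
proof -
  define c where "c = (\<lambda>a b. if a = i \<and> b = j then 1 else (0::complex))"
  define d where "d = (\<lambda>k l. apply_op N A c k l - apply_op N B c k l)"
  have d_gf: "gen_poly N d x y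
      = gf1 N P s (apply_op N A c) (x / (P * s)) (y / s) - gf1 N P s (apply_op N B c) (x / (P * s)) (y / s)"
    for x y using assms(1,2) by (simp add: d_def gf1_def gen_poly_def sum_subtractf left_diff_distrib)
  have "\<forall>k<N. \<forall>l<N. d k l = 0"
  proof (rule gen_poly_zero[where Ybad = "{0, s}"])
    fix y assume y: "y \<notin> {0, s}"
    show "\<exists>Xbad. finite Xbad \<and> (\<forall>x. x \<notin> Xbad \<longrightarrow> gen_poly N d x y = 0)"
    proof (intro exI conjI allI impI)
      show "finite {0, P * s, P * y, P * s^2 / y}" by simp
      fix x assume x: "x \<notin> {0, P * s, P * y, P * s^2 / y}"
      have "generic (x / (P * s)) (y / s)"
        using x y assms(1,2) by (auto simp: generic_def field_simps power2_eq_square)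
      then show "gen_poly N d x y = 0"
        using agree[of c] by (simp add: d_gf agree_generic_def)
    qed
  qed simp
  then show ?thesis
    using assms(4-7) apply_op_basis[of i N j] by (simp add: d_def c_def)
qed

theorem mainTheorem5:
  fixes N :: nat and q p r s lam mu :: complex
  assumes "N \<ge> 1"
    and "q \<noteq> 0" and "p \<noteq> 0" and "r \<noteq> 0" and "s \<noteq> 0"
    and "q^2 \<noteq> 1" and "r^2 \<noteq> 1"
    and "zeta (lam - mu) - inverse (zeta (lam - mu)) \<noteq> 0"
    and "zeta (lam + mu) - inverse (zeta (lam + mu)) \<noteq> 0"
    and "(zeta lam)^2 - inverse ((zeta lam)^2) \<noteq> 0"
    and "(zeta mu)^2 - inverse ((zeta mu)^2) \<noteq> 0"
  shows "\<forall>i<N. \<forall>j<N. \<forall>k<N. \<forall>l<N.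
    op_comp N (CG_R q p (lam - mu))
      (op_comp N (op1 (CG_K N r s lam))
        (op_comp N (op21 (CG_R q p (lam + mu))) (op2 (CG_K N r s mu)))) i j k l
  = op_comp N (op2 (CG_K N r s mu))
      (op_comp N (CG_R q p (lam + mu))
        (op_comp N (op1 (CG_K N r s lam)) (op21 (CG_R q p (lam - mu))))) i j k l"
  using op_eq_of_agree_generic[OF _ _ reflection_agree_generic[OF assms(2-11)]] assms(3,5)
  by simp

end
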